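(* Fix an integer $k\geq 3$. Let $\mathcal{A}$ be any deterministic LOCAL algorithm which, on every $k$-partially $k$-colorable graph (with any valid assignment of identifiers), outputs a $k$-partial $k$-coloring. For $n\ge 1$ let $T_{\mathcal{A}}(n)$ denote the maximum, over all $n$-vertex $k$-partially $k$-colorable graphs $G$ and all valid identifier assignments, of the number of rounds $\mathcal{A}$ uses on $G$. Then $T_{\mathcal{A}}(n)$ is not $o(n/k^3)$; that is, $T_{\mathcal{A}}(n)=\Omega(n/k^3)$ (for infinitely many $n$, with the implied constant independent of $n$), which for constant $k$ is $\Omega(n)$.
   Context: All graphs are finite, simple and undirected; $\deg_G(v)$ denotes the degree of $v$. For integers $k\geq 0$, $c\geq 1$, a $k$-partial $c$-coloring of $G=(V,E)$ is a map $\gamma:V\to\{1,\dots,c\}$ such that every vertex $v$ has at least $\min\{k,\deg_G(v)\}$ neighbors $u$ with $\gamma(u)\neq\gamma(v)$; $G$ is $k$-partially $c$-colorable if such a map exists. LOCAL model: the input graph $G$ on $n$ vertices is the communication network; each vertex has a distinct identifier from $\{1,\dots,n^d\}$ for a fixed constant $d\geq 1$ (a valid identifier assignment), initially knows only its identifier and the identifier range, and computation proceeds in synchronous rounds in which every vertex may send an arbitrarily large message to each neighbor, receive its neighbors' messages, and perform arbitrary local computation; after some number of rounds each vertex outputs (here, its color) and terminates. The complexity is the number of rounds. Equivalently, the output of a vertex after $t$ rounds is a function of its $t$-radius view: the subgraph of $G$ induced by the vertices at distance at most $t$ from it, together with their identifiers. *)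

theory Defs
  imports Main "HOL-Library.Landau_Symbols"
begin

text \<open>Finite simple undirected graphs: vertex set V (natural numbers used as vertex
names; any finite graph is isomorphic to one of these), edges are 2-element subsets of V.\<close>

definition simple_graph :: "nat set \<Rightarrow> nat set set \<Rightarrow> bool" where
  "simple_graph V E \<longleftrightarrow> finite V \<and>
     E \<subseteq> {e. \<exists>u v. e = {u, v} \<and> u \<noteq> v \<and> u \<in> V \<and> v \<in> V}"

definition nbrs :: "nat set set \<Rightarrow> nat \<Rightarrow> nat set" where
  "nbrs E v = {u. {u, v} \<in> E}"

definition deg :: "nat set set \<Rightarrow> nat \<Rightarrow> nat" where
  "deg E v = card (nbrs E v)"

definition partial_coloring :: "nat \<Rightarrow> nat \<Rightarrow> nat set \<Rightarrow> nat set set \<Rightarrow> (nat \<Rightarrow> nat) \<Rightarrow> bool" where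
  "partial_coloring k c V E \<gamma> \<longleftrightarrow>
     (\<forall>v\<in>V. \<gamma> v \<in> {1..c}) \<and>
     (\<forall>v\<in>V. card {u \<in> nbrs E v. \<gamma> u \<noteq> \<gamma> v} \<ge> min k (deg E v))"

definition partially_colorable :: "nat \<Rightarrow> nat \<Rightarrow> nat set \<Rightarrow> nat set set \<Rightarrow> bool" where
  "partially_colorable k c V E \<longleftrightarrow> (\<exists>\<gamma>. partial_coloring k c V E \<gamma>)"

fun ball :: "nat set set \<Rightarrow> nat \<Rightarrow> nat \<Rightarrow> nat set" where
  "ball E v 0 = {v}"
| "ball E v (Suc t) = ball E v t \<union> {u. \<exists>w\<in>ball E v t. {w, u} \<in> E}"

definition valid_ids :: "nat \<Rightarrow> nat \<Rightarrow> nat set \<Rightarrow> (nat \<Rightarrow> nat) \<Rightarrow> bool" where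
  "valid_ids n d V idf \<longleftrightarrow> inj_on idf V \<and> idf ` V \<subseteq> {1..n ^ d}"

type_synonym view = "nat \<times> nat set \<times> nat set set"

definition view :: "nat set set \<Rightarrow> (nat \<Rightarrow> nat) \<Rightarrow> nat \<Rightarrow> nat \<Rightarrow> view" where
  "view E idf t v = (idf v, idf ` ball E v t, {idf ` e | e. e \<in> E \<and> e \<subseteq> ball E v t})"

text \<open>A deterministic LOCAL algorithm is a map A n t W: given the number of vertices n
(equivalently the identifier range {1..n^d}), the current round t and the t-radius view W,
it either continues (None) or outputs color c and terminates (Some c).\<close>

type_synonym algorithm = "nat \<Rightarrow> nat \<Rightarrow> view \<Rightarrow> nat option"

definition halt_time :: "algorithm \<Rightarrow> nat \<Rightarrow> nat set set \<Rightarrow> (nat \<Rightarrow> nat) \<Rightarrow> nat \<Rightarrow> nat" where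
  "halt_time A n E idf v = (LEAST t. A n t (view E idf t v) \<noteq> None)"

definition alg_output :: "algorithm \<Rightarrow> nat \<Rightarrow> nat set set \<Rightarrow> (nat \<Rightarrow> nat) \<Rightarrow> nat \<Rightarrow> nat" where
  "alg_output A n E idf v =
     the (A n (halt_time A n E idf v) (view E idf (halt_time A n E idf v) v))"

definition rounds :: "algorithm \<Rightarrow> nat set \<Rightarrow> nat set set \<Rightarrow> (nat \<Rightarrow> nat) \<Rightarrow> nat" where
  "rounds A V E idf = Max (halt_time A (card V) E idf ` V)"

definition solves :: "nat \<Rightarrow> nat \<Rightarrow> algorithm \<Rightarrow> bool" where
  "solves d k A \<longleftrightarrow>
     (\<forall>V E idf. simple_graph V E \<and> valid_ids (card V) d V idf \<and> partially_colorable k k V E \<longrightarrow>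
        (\<forall>v\<in>V. \<exists>t. A (card V) t (view E idf t v) \<noteq> None) \<and>
        partial_coloring k k V E (alg_output A (card V) E idf))"

definition T :: "nat \<Rightarrow> nat \<Rightarrow> algorithm \<Rightarrow> nat \<Rightarrow> nat" where
  "T d k A n = Sup {rounds A V E idf | V E idf.
      simple_graph V E \<and> card V = n \<and> valid_ids n d V idf \<and> partially_colorable k k V E}"

end

theory Submission
  imports Defs
begin

(*
  Chain m gadgets: gadget i consists of two hubs h_i, h_(i+1) and a clique of k - 1 inner
  vertices, each joined to both hubs.  The inner vertices have degree exactly k, so a k-partial
  k-colouring colours them properly with k - 1 distinct colours, which leaves one and the same
  colour for both hubs; hence h_0 and h_m get the same colour.  Replacing gadget j by a direct
  edge h_j h_(j+1) gives another k-partially k-colourable graph, in which h_(j+1) has degree k and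
  so must differ from h_j; now h_0 and h_m get different colours.  For m = 2t + 3 and j = t + 1
  the radius-t balls around h_0 and h_m avoid gadgets j and j + 1, so with the same identifiers
  both vertices have the same radius-t views in the two graphs.  An algorithm finishing within t
  rounds therefore colours them alike in both graphs, which is impossible.  Hence
  T((2t + 3) k + 1) > t: along these n, T(n) >= n/(2k) - 1, which is not o(n/k^3).
*)

section \<open>Balls, views and relabelling\<close>

lemma edge_subset_vertices: "simple_graph V E \<Longrightarrow> e \<in> E \<Longrightarrow> e \<subseteq> V"
  unfolding simple_graph_def by auto

lemma ball_mono: "s \<le> t \<Longrightarrow> ball E v s \<subseteq> ball E v t"
  by (induction t) (auto simp: le_Suc_eq)

lemma ball_subset_vertices:
  assumes "simple_graph V E" "v \<in> V" shows "ball E v t \<subseteq> V"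
proof (induction t)
  case (Suc t)
  have "{w, u} \<in> E \<Longrightarrow> u \<in> V" for w u using edge_subset_vertices[OF assms(1)] by blast
  with Suc show ?case by auto
qed (simp add: assms(2))

lemma ball_potential_bound:
  assumes step: "\<And>u w. {u, w} \<in> E \<Longrightarrow> \<psi> w \<le> \<psi> u + 1"
  shows "w \<in> ball E v t \<Longrightarrow> \<psi> w \<le> \<psi> v + t \<and> \<psi> v \<le> \<psi> w + t"
proof (induction t arbitrary: w)
  case (Suc t)
  show ?case
  proof (cases "w \<in> ball E v t")
    case False
    then obtain x where x: "x \<in> ball E v t" "{x, w} \<in> E" using Suc.prems by auto
    have "\<psi> w \<le> \<psi> x + 1" "\<psi> x \<le> \<psi> w + 1"
      using step[OF x(2)] step[of w x] x(2) by (simp_all add: insert_commute)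
    with Suc.IH[OF x(1)] show ?thesis by simp
  qed (use Suc.IH in fastforce)
qed simp

lemma edge_image_iff:
  assumes "simple_graph V E" "inj_on f V" "w \<in> V"
  shows "{f w, u'} \<in> (`) f ` E \<longleftrightarrow> (\<exists>u. {w, u} \<in> E \<and> u' = f u)"
proof
  assume "{f w, u'} \<in> (`) f ` E"
  then obtain a b where ab: "{a, b} \<in> E" "{f w, u'} = {f a, f b}"
    using assms(1) unfolding simple_graph_def by auto
  moreover have "a \<in> V" "b \<in> V" using edge_subset_vertices[OF assms(1) ab(1)] by auto
  moreover have "(f w = f a \<and> u' = f b) \<or> (f w = f b \<and> u' = f a)"
    using ab(2) by (simp add: doubleton_eq_iff)
  ultimately have "(w = a \<and> u' = f b) \<or> (w = b \<and> u' = f a)"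
    using assms(2,3) by (simp add: inj_on_eq_iff)
  then show "\<exists>u. {w, u} \<in> E \<and> u' = f u"
    using ab(1) by (metis insert_commute)
next
  assume "\<exists>u. {w, u} \<in> E \<and> u' = f u"
  then obtain u where u: "{w, u} \<in> E" "u' = f u" by blast
  then have "{f w, u'} = f ` {w, u}" by simp
  from this u(1) show "{f w, u'} \<in> (`) f ` E" by (rule image_eqI)
qed

lemma ball_image:
  assumes "simple_graph V E" "inj_on f V" "v \<in> V"
  shows "ball ((`) f ` E) (f v) t = f ` ball E v t"
proof (induction t)
  case (Suc t)
  have "x \<in> {u'. \<exists>w\<in>ball ((`) f ` E) (f v) t. {w, u'} \<in> (`) f ` E} \<longleftrightarrow>
        x \<in> f ` {u. \<exists>w\<in>ball E v t. {w, u} \<in> E}" for x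
  proof -
    have "x \<in> {u'. \<exists>w\<in>ball ((`) f ` E) (f v) t. {w, u'} \<in> (`) f ` E} \<longleftrightarrow>
          (\<exists>w\<in>ball E v t. {f w, x} \<in> (`) f ` E)" using Suc by simp
    also have "\<dots> \<longleftrightarrow> (\<exists>w\<in>ball E v t. \<exists>u. {w, u} \<in> E \<and> x = f u)"
      using edge_image_iff[OF assms(1,2)] ball_subset_vertices[OF assms(1,3)] by (meson subsetD)
    finally show ?thesis by blast
  qed
  then show ?case using Suc by (simp add: set_eq_iff[symmetric] image_Un)
qed simp

lemma view_image:
  assumes "simple_graph V E" "inj_on f V" "v \<in> V"
  shows "view E f t v = view ((`) f ` E) id t (f v)"
proof -
  have "e \<subseteq> ball E v t \<longleftrightarrow> f ` e \<subseteq> f ` ball E v t" if "e \<in> E" for e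
    using inj_on_image_mem_iff[OF assms(2) _ ball_subset_vertices[OF assms(1,3)]]
      edge_subset_vertices[OF assms(1) that] by blast
  then have "{f ` e |e. e \<in> E \<and> e \<subseteq> ball E v t} = {e' \<in> (`) f ` E. e' \<subseteq> f ` ball E v t}"
    by blast
  then show ?thesis unfolding view_def using ball_image[OF assms] by simp
qed

lemma rounds_image:
  assumes "simple_graph V E" "inj_on f V"
  shows "rounds A V E f = rounds A (f ` V) ((`) f ` E) id"
proof -
  have "halt_time A (card V) E f v = halt_time A (card V) ((`) f ` E) id (f v)" if "v \<in> V" for v
    unfolding halt_time_def using view_image[OF assms that] by simp
  then have "halt_time A (card V) E f ` V = halt_time A (card V) ((`) f ` E) id ` f ` V"
    by (simp add: image_image cong: image_cong)
  then show ?thesis unfolding rounds_def using card_image[OF assms(2)] by simp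
qed

text \<open>T is a supremum of natural numbers, i.e. a Max, which says nothing about an infinite set.
  Relabelling by identifiers shows that the round counts entering T come from finitely many graphs.\<close>

lemma finite_rounds:
  "finite {rounds A V E idf | V E idf. simple_graph V E \<and> valid_ids n d V idf}"
proof (rule finite_subset)
  let ?N = "{1..n ^ d}"
  show "{rounds A V E idf | V E idf. simple_graph V E \<and> valid_ids n d V idf}
        \<subseteq> (\<lambda>(W, F). rounds A W F id) ` (Pow ?N \<times> Pow (Pow ?N))"
  proof clarify
    fix V E idf assume G: "simple_graph V E" and ids: "valid_ids n d V idf"
    then have "inj_on idf V" "idf ` V \<subseteq> ?N" unfolding valid_ids_def by auto
    moreover have "(`) idf ` E \<subseteq> Pow ?N"
      using edge_subset_vertices[OF G] \<open>idf ` V \<subseteq> ?N\<close> by blast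
    ultimately show "rounds A V E idf \<in> (\<lambda>(W, F). rounds A W F id) ` (Pow ?N \<times> Pow (Pow ?N))"
      using rounds_image[OF G] by (auto intro!: image_eqI[of _ _ "(idf ` V, (`) idf ` E)"])
  qed
qed simp

lemma rounds_le_T:
  assumes "simple_graph V E" "card V = n" "valid_ids n d V idf" "partially_colorable k k V E"
  shows "rounds A V E idf \<le> T d k A n"
  unfolding T_def
proof (rule le_cSup_finite)
  show "finite {rounds A V E idf | V E idf.
      simple_graph V E \<and> card V = n \<and> valid_ids n d V idf \<and> partially_colorable k k V E}"
    by (rule finite_subset[OF _ finite_rounds[of A n d]]) blast
qed (use assms in blast)

lemma halt_time_le_rounds: "finite V \<Longrightarrow> v \<in> V \<Longrightarrow> halt_time A (card V) E idf v \<le> rounds A V E idf"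
  unfolding rounds_def by simp

lemma solves_halts:
  assumes "solves d k A" "simple_graph V E" "valid_ids (card V) d V idf" "partially_colorable k k V E"
    and "v \<in> V"
  shows "A (card V) (halt_time A (card V) E idf v) (view E idf (halt_time A (card V) E idf v) v) \<noteq> None"
proof -
  have "\<exists>t. A (card V) t (view E idf t v) \<noteq> None" using assms unfolding solves_def by blast
  then show ?thesis unfolding halt_time_def by (rule LeastI_ex)
qed

section \<open>Locality\<close>

lemma Least_eq_if_agree_below:
  fixes t :: "'a::wellorder"
  assumes "P t" and agree: "\<And>s. s \<le> t \<Longrightarrow> Q s \<longleftrightarrow> P s"
  shows "(LEAST s. Q s) = (LEAST s. P s)"
proof (rule Least_equality)
  have le: "(LEAST s. P s) \<le> t" using \<open>P t\<close> by (rule Least_le)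
  then show "Q (LEAST s. P s)" using agree LeastI[of P, OF \<open>P t\<close>] by blast
  show "(LEAST s. P s) \<le> s" if "Q s" for s
  proof (cases "s \<le> t")
    case True
    then show ?thesis using that agree Least_le by blast
  qed (use le in auto)
qed

lemma ball_eq_if_edges_agree:
  assumes agree: "\<And>u w. u \<in> R \<Longrightarrow> {u, w} \<in> E2 \<longleftrightarrow> {u, w} \<in> E1"
  shows "ball E1 v t \<subseteq> R \<Longrightarrow> ball E2 v t = ball E1 v t"
proof (induction t)
  case (Suc t)
  then have R: "ball E1 v t \<subseteq> R" by auto
  have "{u. \<exists>w\<in>ball E1 v t. {w, u} \<in> E2} = {u. \<exists>w\<in>ball E1 v t. {w, u} \<in> E1}"
    using agree R by blast
  with Suc.IH[OF R] show ?case by simp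
qed simp

lemma view_eq_if_edges_agree:
  assumes "simple_graph V1 E1" "simple_graph V2 E2"
    and agree: "\<And>u w. u \<in> R \<Longrightarrow> {u, w} \<in> E2 \<longleftrightarrow> {u, w} \<in> E1"
    and R: "ball E1 v t \<subseteq> R"
  shows "view E2 idf t v = view E1 idf t v"
proof -
  have ball: "ball E2 v t = ball E1 v t" by (rule ball_eq_if_edges_agree[OF agree R])
  have "e \<in> E2 \<longleftrightarrow> e \<in> E1" if sub: "e \<subseteq> ball E1 v t" and e: "e \<in> E1 \<or> e \<in> E2" for e
  proof -
    obtain a b where "e = {a, b}"
      using e assms(1,2) unfolding simple_graph_def by blast
    with sub R agree show ?thesis by auto
  qed
  then have "{e. e \<in> E2 \<and> e \<subseteq> ball E2 v t} = {e. e \<in> E1 \<and> e \<subseteq> ball E1 v t}"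
    using ball by blast
  then show ?thesis unfolding view_def ball by (simp add: setcompr_eq_image)
qed

lemma halt_time_eq_if_views_eq:
  assumes views: "\<And>s. s \<le> t \<Longrightarrow> view E2 idf s v = view E1 idf s v"
    and halts: "A n t (view E1 idf t v) \<noteq> None"
  shows "halt_time A n E2 idf v = halt_time A n E1 idf v"
  unfolding halt_time_def
  by (rule Least_eq_if_agree_below[where P = "\<lambda>s. A n s (view E1 idf s v) \<noteq> None", OF halts])
    (simp add: views)

lemma alg_output_eq_if_edges_agree:
  assumes "simple_graph V1 E1" "simple_graph V2 E2"
    and agree: "\<And>u w. u \<in> R \<Longrightarrow> {u, w} \<in> E2 \<longleftrightarrow> {u, w} \<in> E1"
    and R: "ball E1 v t \<subseteq> R"
    and halts: "A n t (view E1 idf t v) \<noteq> None"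
  shows "alg_output A n E2 idf v = alg_output A n E1 idf v"
proof -
  have views: "view E2 idf s v = view E1 idf s v" if "s \<le> t" for s
    using view_eq_if_edges_agree[OF assms(1,2) agree] ball_mono[OF that] R by blast
  have "halt_time A n E2 idf v = halt_time A n E1 idf v"
    using views halts by (rule halt_time_eq_if_views_eq)
  moreover have "halt_time A n E1 idf v \<le> t"
    unfolding halt_time_def using halts by (rule Least_le)
  ultimately show ?thesis unfolding alg_output_def using views by simp
qed

lemma partially_colorable_if_proper:
  assumes "\<And>v. v \<in> V \<Longrightarrow> \<gamma> v \<in> {1..c}" "\<And>v u. v \<in> V \<Longrightarrow> u \<in> nbrs E v \<Longrightarrow> \<gamma> u \<noteq> \<gamma> v"
  shows "partially_colorable k c V E"
proof -
  have "{u \<in> nbrs E v. \<gamma> u \<noteq> \<gamma> v} = nbrs E v" if "v \<in> V" for v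
    using assms(2)[OF that] by blast
  then have "partial_coloring k c V E \<gamma>" unfolding partial_coloring_def deg_def using assms(1) by simp
  then show ?thesis unfolding partially_colorable_def by blast
qed

lemma partial_coloring_low_degree:
  assumes "partial_coloring k c V E \<gamma>" "v \<in> V" "finite (nbrs E v)" "deg E v \<le> k"
    and "u \<in> nbrs E v"
  shows "\<gamma> u \<noteq> \<gamma> v"
proof -
  have "min k (deg E v) \<le> card {u \<in> nbrs E v. \<gamma> u \<noteq> \<gamma> v}"
    using assms(1,2) unfolding partial_coloring_def by simp
  then have "card (nbrs E v) \<le> card {u \<in> nbrs E v. \<gamma> u \<noteq> \<gamma> v}"
    using assms(4) unfolding deg_def by simp
  then have "{u \<in> nbrs E v. \<gamma> u \<noteq> \<gamma> v} = nbrs E v"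
    by (intro card_seteq[OF assms(3)]) auto
  with assms(5) show ?thesis by blast
qed

lemma eq_if_mem_Diff_card_Suc:
  assumes "finite A" "C \<subseteq> A" "card A = Suc (card C)" "x \<in> A - C" "y \<in> A - C"
  shows "x = y"
proof -
  have "card (A - C) = 1"
    using assms(1-3) by (simp add: card_Diff_subset finite_subset)
  then obtain z where "A - C = {z}" by (rule card_1_singletonE)
  with assms(4,5) show ?thesis by simp
qed

section \<open>Chains of gadgets\<close>

definition chain_vertex :: "nat \<Rightarrow> nat \<Rightarrow> nat \<Rightarrow> nat" where
  "chain_vertex k i a = i * k + a"

abbreviation hub :: "nat \<Rightarrow> nat \<Rightarrow> nat" where
  "hub k i \<equiv> chain_vertex k i 0"

lemma chain_vertex_div [simp]: "a < k \<Longrightarrow> chain_vertex k i a div k = i"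
  and chain_vertex_mod [simp]: "a < k \<Longrightarrow> chain_vertex k i a mod k = a"
  unfolding chain_vertex_def by simp_all

lemma chain_vertex_eq_iff [simp]:
  "a < k \<Longrightarrow> b < k \<Longrightarrow> chain_vertex k i a = chain_vertex k j b \<longleftrightarrow> i = j \<and> a = b"
  by (metis chain_vertex_div chain_vertex_mod)

text \<open>Gadget i has the hubs \<^term>\<open>hub k i\<close> and \<^term>\<open>hub k (Suc i)\<close> and the inner
  vertices \<^term>\<open>chain_vertex k i a\<close> for 0 < a < k.  For a gadget i in J the inner vertices
  are not joined to the right hub; the two hubs are linked directly instead.\<close>

definition chain_adj :: "nat \<Rightarrow> nat \<Rightarrow> nat set \<Rightarrow> nat \<Rightarrow> nat \<Rightarrow> bool" where
  "chain_adj k m J u v \<longleftrightarrow>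
    (\<exists>i a. i < m \<and> 0 < a \<and> a < k \<and> v = chain_vertex k i a \<and>
       (u = hub k i \<or> (i \<notin> J \<and> u = hub k (Suc i)) \<or>
        (\<exists>b. 0 < b \<and> b < k \<and> b \<noteq> a \<and> u = chain_vertex k i b)))
    \<or> (\<exists>i\<in>J. u = hub k i \<and> v = hub k (Suc i))"

definition chain_edges :: "nat \<Rightarrow> nat \<Rightarrow> nat set \<Rightarrow> nat set set" where
  "chain_edges k m J = {{u, v} | u v. chain_adj k m J u v}"

definition chain_vertices :: "nat \<Rightarrow> nat \<Rightarrow> nat set" where
  "chain_vertices k m = {..m * k}"

lemma chain_adjE:
  assumes "chain_adj k m J u v"
  obtains (hub_left) i a where "i < m" "0 < a" "a < k" "v = chain_vertex k i a" "u = hub k i"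
    | (hub_right) i a where "i < m" "0 < a" "a < k" "v = chain_vertex k i a" "i \<notin> J"
        "u = hub k (Suc i)"
    | (inner) i a b where "i < m" "0 < a" "a < k" "0 < b" "b < k" "b \<noteq> a"
        "v = chain_vertex k i a" "u = chain_vertex k i b"
    | (link) i where "i \<in> J" "u = hub k i" "v = hub k (Suc i)"
  using assms unfolding chain_adj_def by blast

lemma chain_adjI:
  "i < m \<Longrightarrow> 0 < a \<Longrightarrow> a < k \<Longrightarrow> chain_adj k m J (hub k i) (chain_vertex k i a)"
  "i < m \<Longrightarrow> i \<notin> J \<Longrightarrow> 0 < a \<Longrightarrow> a < k \<Longrightarrow> chain_adj k m J (hub k (Suc i)) (chain_vertex k i a)"
  "i < m \<Longrightarrow> 0 < a \<Longrightarrow> a < k \<Longrightarrow> 0 < b \<Longrightarrow> b < k \<Longrightarrow> b \<noteq> a \<Longrightarrow>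
    chain_adj k m J (chain_vertex k i b) (chain_vertex k i a)"
  "i \<in> J \<Longrightarrow> chain_adj k m J (hub k i) (hub k (Suc i))"
  unfolding chain_adj_def by blast+

lemma chain_vertex_mem: "i < m \<Longrightarrow> a < k \<Longrightarrow> chain_vertex k i a \<in> chain_vertices k m"
proof -
  assume "i < m" "a < k"
  then have "i * k + a < Suc i * k" by simp
  also have "\<dots> \<le> m * k" using \<open>i < m\<close> by (intro mult_le_mono1) simp
  finally show ?thesis unfolding chain_vertices_def chain_vertex_def by simp
qed

lemma hub_mem: "i \<le> m \<Longrightarrow> hub k i \<in> chain_vertices k m"
  unfolding chain_vertices_def chain_vertex_def by simp

lemma card_chain_vertices: "card (chain_vertices k m) = m * k + 1"
  unfolding chain_vertices_def by simp

lemma mem_chain_edges: "{u, v} \<in> chain_edges k m J \<longleftrightarrow> chain_adj k m J u v \<or> chain_adj k m J v u"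
  unfolding chain_edges_def by (auto simp: doubleton_eq_iff)

lemma nbrs_chain_edges: "nbrs (chain_edges k m J) v = {u. chain_adj k m J u v \<or> chain_adj k m J v u}"
  unfolding nbrs_def using mem_chain_edges by (auto simp: insert_commute)

lemma chain_adj_in_vertices:
  assumes "chain_adj k m J u v" "J \<subseteq> {..<m}" "k \<ge> 3"
  shows "u \<noteq> v \<and> u \<in> chain_vertices k m \<and> v \<in> chain_vertices k m"
  using assms(1)
proof (cases rule: chain_adjE)
  case (link i)
  then show ?thesis using assms(2,3) hub_mem[of i m k] hub_mem[of "Suc i" m k] by auto
qed (use assms(3) chain_vertex_mem hub_mem in auto)

lemma simple_graph_chain:
  assumes "J \<subseteq> {..<m}" "k \<ge> 3"
  shows "simple_graph (chain_vertices k m) (chain_edges k m J)"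
  unfolding simple_graph_def chain_edges_def
proof
  show "finite (chain_vertices k m)" by (simp add: chain_vertices_def)
  show "{{u, v} |u v. chain_adj k m J u v}
    \<subseteq> {e. \<exists>u v. e = {u, v} \<and> u \<noteq> v \<and> u \<in> chain_vertices k m \<and> v \<in> chain_vertices k m}"
    using chain_adj_in_vertices[OF _ assms] by blast
qed

lemma valid_ids_chain_Suc:
  assumes "d \<ge> 1" shows "valid_ids (card (chain_vertices k m)) d (chain_vertices k m) Suc"
proof -
  have "Suc (m * k) \<le> Suc (m * k) ^ d" using assms by (simp add: self_le_power)
  then show ?thesis unfolding valid_ids_def card_chain_vertices chain_vertices_def by auto
qed

text \<open>A proper colouring of the chain: the hub colour switches between 1 and 2 at every link,
  and \<^term>\<open>skip h\<close> maps the inner vertices 1, ..., k - 1 of a gadget onto the colours other than h.\<close>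

definition hub_color :: "nat set \<Rightarrow> nat \<Rightarrow> nat" where
  "hub_color J i = (if even (card {j \<in> J. j < i}) then 1 else 2)"

definition skip :: "nat \<Rightarrow> nat \<Rightarrow> nat" where
  "skip h a = (if a < h then a else Suc a)"

definition chain_coloring :: "nat \<Rightarrow> nat set \<Rightarrow> nat \<Rightarrow> nat" where
  "chain_coloring k J v =
    (if v mod k = 0 then hub_color J (v div k) else skip (hub_color J (v div k)) (v mod k))"

lemma skip_neq [simp]: "skip h a \<noteq> h" "h \<noteq> skip h a"
  and skip_eq_iff [simp]: "skip h a = skip h b \<longleftrightarrow> a = b"
  unfolding skip_def by auto

lemma hub_color_Suc: "hub_color J (Suc i) = hub_color J i \<longleftrightarrow> i \<notin> J"
proof (cases "i \<in> J")
  case True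
  then have "{j \<in> J. j < Suc i} = insert i {j \<in> J. j < i}" by (auto simp: less_Suc_eq)
  moreover have "finite {j \<in> J. j < i}" by simp
  ultimately show ?thesis using True unfolding hub_color_def by simp
next
  case False
  then have "{j \<in> J. j < Suc i} = {j \<in> J. j < i}" by (auto simp: less_Suc_eq)
  then show ?thesis using False unfolding hub_color_def by simp
qed

lemma chain_coloring_hub [simp]: "0 < k \<Longrightarrow> chain_coloring k J (hub k i) = hub_color J i"
  and chain_coloring_inner [simp]:
    "0 < a \<Longrightarrow> a < k \<Longrightarrow> chain_coloring k J (chain_vertex k i a) = skip (hub_color J i) a"
  unfolding chain_coloring_def by simp_all

lemma chain_coloring_proper:
  assumes "k \<ge> 3" "chain_adj k m J u v"
  shows "chain_coloring k J u \<noteq> chain_coloring k J v"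
  using assms(2)
proof (cases rule: chain_adjE)
  case (hub_right i a)
  then show ?thesis using assms(1) hub_color_Suc[of J i] by simp
next
  case (link i)
  then show ?thesis using assms(1) hub_color_Suc[of J i] by simp
qed (use assms(1) in simp_all)

lemma chain_coloring_range:
  assumes "k \<ge> 3" shows "chain_coloring k J v \<in> {1..k}"
proof -
  have "v mod k < k" using assms by simp
  then show ?thesis using assms unfolding chain_coloring_def skip_def hub_color_def
    by (auto simp: Suc_le_eq)
qed

lemma partially_colorable_chain:
  assumes "k \<ge> 3" shows "partially_colorable k' k (chain_vertices k m) (chain_edges k m J)"
proof (rule partially_colorable_if_proper[where \<gamma> = "chain_coloring k J"])
  show "chain_coloring k J v \<in> {1..k}" for v by (rule chain_coloring_range[OF assms])
  show "chain_coloring k J u \<noteq> chain_coloring k J v" if "u \<in> nbrs (chain_edges k m J) v" for u v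
    using that chain_coloring_proper[OF assms, of m J u v] chain_coloring_proper[OF assms, of m J v u]
    unfolding nbrs_chain_edges by auto
qed

section \<open>Rigidity of the gadgets\<close>

lemma nbrs_inner_vertex:
  assumes "k \<ge> 3" "i < m" "i \<notin> J" "0 < a" "a < k"
  shows "nbrs (chain_edges k m J) (chain_vertex k i a) =
    chain_vertex k i ` ({0<..<k} - {a}) \<union> {hub k i, hub k (Suc i)}"
proof (intro set_eqI iffI)
  fix u assume "u \<in> nbrs (chain_edges k m J) (chain_vertex k i a)"
  then consider "chain_adj k m J u (chain_vertex k i a)" | "chain_adj k m J (chain_vertex k i a) u"
    unfolding nbrs_chain_edges by blast
  then show "u \<in> chain_vertex k i ` ({0<..<k} - {a}) \<union> {hub k i, hub k (Suc i)}"
  proof cases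
    case 1
    then show ?thesis by (cases rule: chain_adjE) (use assms in simp_all)
  next
    case 2
    then show ?thesis by (cases rule: chain_adjE) (use assms in simp_all)
  qed
next
  fix u assume "u \<in> chain_vertex k i ` ({0<..<k} - {a}) \<union> {hub k i, hub k (Suc i)}"
  then have "chain_adj k m J u (chain_vertex k i a)"
    using assms by (auto intro: chain_adjI)
  then show "u \<in> nbrs (chain_edges k m J) (chain_vertex k i a)"
    unfolding nbrs_chain_edges by blast
qed

lemma nbrs_hub_after_link:
  assumes "k \<ge> 3" "i \<in> J" "Suc i \<notin> J" "Suc i < m"
  shows "nbrs (chain_edges k m J) (hub k (Suc i)) = chain_vertex k (Suc i) ` {0<..<k} \<union> {hub k i}"
proof (intro set_eqI iffI)
  fix u assume "u \<in> nbrs (chain_edges k m J) (hub k (Suc i))"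
  then consider "chain_adj k m J u (hub k (Suc i))" | "chain_adj k m J (hub k (Suc i)) u"
    unfolding nbrs_chain_edges by blast
  then show "u \<in> chain_vertex k (Suc i) ` {0<..<k} \<union> {hub k i}"
  proof cases
    case 1
    then show ?thesis by (cases rule: chain_adjE) (use assms in simp_all)
  next
    case 2
    then show ?thesis by (cases rule: chain_adjE) (use assms in simp_all)
  qed
next
  fix u assume "u \<in> chain_vertex k (Suc i) ` {0<..<k} \<union> {hub k i}"
  then have "chain_adj k m J u (hub k (Suc i)) \<or> chain_adj k m J (hub k (Suc i)) u"
    using assms by (auto intro: chain_adjI)
  then show "u \<in> nbrs (chain_edges k m J) (hub k (Suc i))"
    unfolding nbrs_chain_edges by blast
qed

lemma inner_color_neq_nbrs:
  assumes pc: "partial_coloring k c (chain_vertices k m) (chain_edges k m J) \<gamma>"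
    and "k \<ge> 3" "i < m" "i \<notin> J" "0 < a" "a < k"
    and "u \<in> nbrs (chain_edges k m J) (chain_vertex k i a)"
  shows "\<gamma> u \<noteq> \<gamma> (chain_vertex k i a)"
proof (rule partial_coloring_low_degree[OF pc])
  let ?B = "chain_vertex k i ` ({0<..<k} - {a})"
  have "card ?B \<le> k - 2"
    using card_image_le[of "{0<..<k} - {a}" "chain_vertex k i"] assms(5,6) by simp
  then have "card (?B \<union> {hub k i, hub k (Suc i)}) \<le> k"
    using card_Un_le[of ?B "{hub k i, hub k (Suc i)}"] card_insert_le[of "{hub k (Suc i)}" "hub k i"]
      assms(2) by simp
  then show "deg (chain_edges k m J) (chain_vertex k i a) \<le> k"
    unfolding deg_def nbrs_inner_vertex[OF assms(2-6)] .
  show "finite (nbrs (chain_edges k m J) (chain_vertex k i a))"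
    unfolding nbrs_inner_vertex[OF assms(2-6)] by simp
  show "chain_vertex k i a \<in> chain_vertices k m" using chain_vertex_mem assms(3,6) .
qed (rule assms(7))

lemma hubs_same_color_across_gadget:
  assumes pc: "partial_coloring k k (chain_vertices k m) (chain_edges k m J) \<gamma>"
    and k: "k \<ge> 3" and i: "i < m" "i \<notin> J"
  shows "\<gamma> (hub k i) = \<gamma> (hub k (Suc i))"
proof -
  let ?c = "\<lambda>a. \<gamma> (chain_vertex k i a)"
  have proper: "\<gamma> u \<noteq> ?c a"
    if "0 < a" "a < k" "u \<in> chain_vertex k i ` ({0<..<k} - {a}) \<union> {hub k i, hub k (Suc i)}" for a u
    by (rule inner_color_neq_nbrs[OF pc k i that(1,2)])
      (use nbrs_inner_vertex[OF k i that(1,2)] that(3) in simp)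
  have "inj_on ?c {0<..<k}"
  proof (rule inj_onI)
    fix a b assume ab: "a \<in> {0<..<k}" "b \<in> {0<..<k}" "?c a = ?c b"
    show "a = b"
    proof (rule ccontr)
      assume "a \<noteq> b"
      with ab(1) have "chain_vertex k i a \<in> chain_vertex k i ` ({0<..<k} - {b})" by blast
      with ab show False using proper[of b "chain_vertex k i a"] by auto
    qed
  qed
  then have card: "card (?c ` {0<..<k}) = k - 1" by (simp add: card_image)
  have colors: "\<gamma> v \<in> {1..k}" if "v \<in> chain_vertices k m" for v
    using pc that unfolding partial_coloring_def by blast
  have hubs_out: "\<gamma> h \<in> {1..k} - ?c ` {0<..<k}" if h: "h \<in> {hub k i, hub k (Suc i)}" for h
  proof
    show "\<gamma> h \<in> {1..k}" using colors hub_mem h i(1) by auto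
    show "\<gamma> h \<notin> ?c ` {0<..<k}"
    proof
      assume "\<gamma> h \<in> ?c ` {0<..<k}"
      then obtain a where a: "0 < a" "a < k" "\<gamma> h = ?c a" by auto
      have "\<gamma> h \<noteq> ?c a" by (rule proper[OF a(1,2)]) (use h in blast)
      with a(3) show False by contradiction
    qed
  qed
  show ?thesis
  proof (rule eq_if_mem_Diff_card_Suc[of "{1..k}" "?c ` {0<..<k}"])
    show "?c ` {0<..<k} \<subseteq> {1..k}" using colors chain_vertex_mem[OF i(1)] by auto
    show "card {1..k} = Suc (card (?c ` {0<..<k}))" using card k by simp
  qed (use hubs_out in auto)
qed

lemma hubs_differ_across_link:
  assumes pc: "partial_coloring k c (chain_vertices k m) (chain_edges k m J) \<gamma>"
    and k: "k \<ge> 3" and link: "i \<in> J" "Suc i \<notin> J" "Suc i < m"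
  shows "\<gamma> (hub k i) \<noteq> \<gamma> (hub k (Suc i))"
proof (rule partial_coloring_low_degree[OF pc])
  let ?B = "chain_vertex k (Suc i) ` {0<..<k}"
  have "card ?B \<le> k - 1"
    using card_image_le[of "{0<..<k}" "chain_vertex k (Suc i)"] by simp
  then have "card (?B \<union> {hub k i}) \<le> k"
    using card_Un_le[of ?B "{hub k i}"] k by simp
  then show "deg (chain_edges k m J) (hub k (Suc i)) \<le> k"
    unfolding deg_def nbrs_hub_after_link[OF k link] .
  show "finite (nbrs (chain_edges k m J) (hub k (Suc i)))"
    unfolding nbrs_hub_after_link[OF k link] by simp
  show "hub k i \<in> nbrs (chain_edges k m J) (hub k (Suc i))"
    unfolding nbrs_hub_after_link[OF k link] by simp
qed (use hub_mem link(3) in simp)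

lemma hubs_same_color_along_chain:
  assumes pc: "partial_coloring k k (chain_vertices k m) (chain_edges k m J) \<gamma>" and k: "k \<ge> 3"
  shows "lo \<le> hi \<Longrightarrow> hi \<le> m \<Longrightarrow> \<forall>i. lo \<le> i \<and> i < hi \<longrightarrow> i \<notin> J \<Longrightarrow>
    \<gamma> (hub k lo) = \<gamma> (hub k hi)"
proof (induction hi)
  case (Suc hi)
  show ?case
  proof (cases "lo = Suc hi")
    case False
    with Suc.prems have "\<gamma> (hub k lo) = \<gamma> (hub k hi)" by (intro Suc.IH) auto
    also have "\<dots> = \<gamma> (hub k (Suc hi))"
      using Suc.prems False by (intro hubs_same_color_across_gadget[OF pc k]) auto
    finally show ?thesis .
  qed simp
qed simp

section \<open>The lower bound\<close>

lemma chain_edge_div_le_Suc: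
  assumes "k \<ge> 3" "{u, w} \<in> chain_edges k m J"
  shows "w div k \<le> u div k + 1"
proof -
  have "y div k \<le> x div k + 1 \<and> x div k \<le> y div k + 1" if "chain_adj k m J x y" for x y
    using that by (cases rule: chain_adjE) (use assms(1) in simp_all)
  then show ?thesis using assms(2) unfolding mem_chain_edges by blast
qed

lemma chain_adj_insert_iff:
  assumes "k \<ge> 3" "x div k \<notin> {j, Suc j} \<or> y div k \<notin> {j, Suc j}"
  shows "chain_adj k m (insert j J) x y \<longleftrightarrow> chain_adj k m J x y"
proof
  assume "chain_adj k m (insert j J) x y"
  then show "chain_adj k m J x y"
    by (cases rule: chain_adjE) (use assms in \<open>auto intro: chain_adjI\<close>)
next
  assume "chain_adj k m J x y"
  then show "chain_adj k m (insert j J) x y"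
    by (cases rule: chain_adjE) (use assms in \<open>auto intro: chain_adjI\<close>)
qed

lemma chain_edges_insert_iff:
  assumes "k \<ge> 3" "u div k \<notin> {j, Suc j}"
  shows "{u, w} \<in> chain_edges k m (insert j J) \<longleftrightarrow> {u, w} \<in> chain_edges k m J"
  unfolding mem_chain_edges using chain_adj_insert_iff[OF assms(1)] assms(2) by blast

lemma alg_output_chain_eq_far_from_link:
  assumes k: "k \<ge> 3" and J: "insert j J \<subseteq> {..<m}"
    and halts: "A n h (view (chain_edges k m J) idf h v) \<noteq> None"
    and far: "v div k + h < j \<or> Suc j + h < v div k"
  shows "alg_output A n (chain_edges k m (insert j J)) idf v = alg_output A n (chain_edges k m J) idf v"
proof (rule alg_output_eq_if_edges_agree[where R = "{u. u div k \<notin> {j, Suc j}}"])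
  show "simple_graph (chain_vertices k m) (chain_edges k m J)"
    "simple_graph (chain_vertices k m) (chain_edges k m (insert j J))"
    using J k by (auto intro: simple_graph_chain)
  show "{u, w} \<in> chain_edges k m (insert j J) \<longleftrightarrow> {u, w} \<in> chain_edges k m J"
    if "u \<in> {u. u div k \<notin> {j, Suc j}}" for u w
    using chain_edges_insert_iff[OF k] that by blast
  show "ball (chain_edges k m J) v h \<subseteq> {u. u div k \<notin> {j, Suc j}}"
    using ball_potential_bound[of "chain_edges k m J" "\<lambda>u. u div k", OF chain_edge_div_le_Suc[OF k]]
      far by fastforce
qed (rule halts)

lemma alg_output_chain_ends_eq:
  assumes d: "d \<ge> 1" and k: "k \<ge> 3" and sol: "solves d k A"
    and fast: "T d k A (card (chain_vertices k (2 * t + 3))) \<le> t"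
    and v: "v \<in> {hub k 0, hub k (2 * t + 3)}"
  shows "alg_output A (card (chain_vertices k (2 * t + 3))) (chain_edges k (2 * t + 3) {Suc t}) Suc v =
    alg_output A (card (chain_vertices k (2 * t + 3))) (chain_edges k (2 * t + 3) {}) Suc v"
proof -
  define m where "m = 2 * t + 3"
  let ?V = "chain_vertices k m"
  let ?n = "card ?V"
  let ?h = "halt_time A ?n (chain_edges k m {}) Suc v"
  have G: "simple_graph ?V (chain_edges k m {})" "partially_colorable k k ?V (chain_edges k m {})"
    using simple_graph_chain[OF _ k] partially_colorable_chain[OF k] by simp_all
  note ids = valid_ids_chain_Suc[OF d, of k m]
  have "v \<in> ?V" using v hub_mem unfolding m_def by auto
  then have "?h \<le> rounds A ?V (chain_edges k m {}) Suc"
    by (intro halt_time_le_rounds) (simp add: chain_vertices_def)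
  also have "\<dots> \<le> T d k A ?n" by (rule rounds_le_T[OF G(1) refl ids G(2)])
  also have "\<dots> \<le> t" using fast unfolding m_def .
  finally have "?h \<le> t" .
  have "alg_output A ?n (chain_edges k m (insert (Suc t) {})) Suc v = alg_output A ?n (chain_edges k m {}) Suc v"
  proof (rule alg_output_chain_eq_far_from_link[OF k])
    show "insert (Suc t) {} \<subseteq> {..<m}" unfolding m_def by simp
    show "A ?n ?h (view (chain_edges k m {}) Suc ?h v) \<noteq> None"
      by (rule solves_halts[OF sol G(1) ids G(2) \<open>v \<in> ?V\<close>])
    show "v div k + ?h < Suc t \<or> Suc (Suc t) + ?h < v div k"
      using v \<open>?h \<le> t\<close> k unfolding m_def by auto
  qed
  then show ?thesis unfolding m_def by simp
qed

lemma T_lower_bound: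
  assumes d: "d \<ge> 1" and k: "k \<ge> 3" and sol: "solves d k A"
  shows "Suc t \<le> T d k A ((2 * t + 3) * k + 1)"
proof (rule ccontr)
  define m where "m = 2 * t + 3"
  let ?\<gamma> = "\<lambda>J. alg_output A (card (chain_vertices k m)) (chain_edges k m J) Suc"
  assume "\<not> Suc t \<le> T d k A ((2 * t + 3) * k + 1)"
  then have far: "?\<gamma> {Suc t} v = ?\<gamma> {} v" if "v \<in> {hub k 0, hub k m}" for v
    using alg_output_chain_ends_eq[OF d k sol _ that[unfolded m_def]]
    unfolding card_chain_vertices m_def by simp
  have coloring: "partial_coloring k k (chain_vertices k m) (chain_edges k m J) (?\<gamma> J)"
    if "J \<subseteq> {..<m}" for J
    using sol simple_graph_chain[OF that k] valid_ids_chain_Suc[OF d] partially_colorable_chain[OF k]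
    unfolding solves_def by blast
  have "?\<gamma> {} (hub k 0) = ?\<gamma> {} (hub k m)"
    by (rule hubs_same_color_along_chain[OF coloring k]) auto
  moreover have "?\<gamma> {Suc t} (hub k 0) = ?\<gamma> {Suc t} (hub k (Suc t))"
      and "?\<gamma> {Suc t} (hub k (Suc (Suc t))) = ?\<gamma> {Suc t} (hub k m)"
    by (rule hubs_same_color_along_chain[OF coloring k]; use m_def in auto)+
  moreover have "?\<gamma> {Suc t} (hub k (Suc t)) \<noteq> ?\<gamma> {Suc t} (hub k (Suc (Suc t)))"
    by (rule hubs_differ_across_link[OF coloring k]) (auto simp: m_def)
  ultimately show False using far by simp
qed

theorem theorem2:
  fixes d k :: nat and A :: algorithm
  assumes "d \<ge> 1" and "k \<ge> 3" and "solves d k A"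
  shows "(\<lambda>n. real (T d k A n)) \<notin> o(\<lambda>n. real n / real k ^ 3)"
proof
  have k: "real k > 0" using assms(2) by simp
  assume "(\<lambda>n. real (T d k A n)) \<in> o(\<lambda>n. real n / real k ^ 3)"
  from landau_o.smallD[OF this, of "real k ^ 2 / 8"] k
  have "\<forall>\<^sub>F n in at_top. real (T d k A n) \<le> real n / (8 * real k)"
    by (simp add: power2_eq_square power3_eq_cube field_simps)
  then obtain N where N: "\<And>n. n \<ge> N \<Longrightarrow> real (T d k A n) \<le> real n / (8 * real k)"
    unfolding eventually_at_top_linorder by blast
  define n where "n = (2 * N + 3) * k + 1"
  have "N \<le> (2 * N + 3) * 1" by simp
  also have "\<dots> \<le> n" using assms(2) unfolding n_def by (intro trans_le_add1 mult_le_mono2) simp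
  finally have "N \<le> n" .
  have "real (Suc N) \<le> real (T d k A n)"
    using T_lower_bound[OF assms, of N] unfolding n_def by simp
  also have "\<dots> \<le> real n / (8 * real k)" using N[OF \<open>N \<le> n\<close>] .
  also have "\<dots> \<le> (2 * real N + 4) * real k / (8 * real k)"
    using k by (intro divide_right_mono) (simp_all add: n_def algebra_simps)
  also have "\<dots> = (real N + 2) / 4" using k by (simp add: field_simps)
  finally show False by simp
qed

end
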